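(* Let $\mathbb{F}$ be a field, $d\geq1$ and $V$ a vector space over $\mathbb{F}$ of dimension $d+1$. Let $E^*_0,\dots,E^*_d$ be a system of mutually orthogonal idempotents in $\mathrm{End}(V)$ and $A\in\mathrm{End}(V)$ with $E^*_iAE^*_j=0$ if $|i-j|>1$ and $E^*_iAE^*_j\neq0$ if $|i-j|=1$. Assume $A$ is multiplicity-free and bipartite, with primitive idempotents $E_0,\dots,E_d$ and corresponding eigenvalues $\theta_0,\dots,\theta_d$. Let $\theta^*_0,\dots,\theta^*_d\in\mathbb{F}$ and $A^*=\sum_i\theta^*_iE^*_i$. If $(A;\{E_i\}_{i=0}^d;A^*;\{E^*_i\}_{i=0}^d)$ is a Leonard system, then $$\theta_i(\theta^*_{d-i-1}-\theta^*_{i+1})=\theta_{i+1}(\theta^*_{d-i}-\theta^*_i)\qquad(0\le i\le d-1).$$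
   Context: A system of mutually orthogonal idempotents: $E^*_iE^*_j=\delta_{ij}E^*_i$, $\operatorname{rank}E^*_i=1$. $A$ multiplicity-free: $d+1$ distinct eigenvalues in $\mathbb{F}$; $E_i$ is the projection onto the $\theta_i$-eigenspace along the other eigenspaces. Bipartite: $\operatorname{tr}(E^*_iA)=0$ for all $i$. A Leonard system on $V$ is a sequence $(A;\{E_i\};A^*;\{E^*_i\})$ such that $A$ and $A^*$ are multiplicity-free, $E_0,\dots,E_d$ is an ordering of the primitive idempotents of $A$, $E^*_0,\dots,E^*_d$ is an ordering of the primitive idempotents of $A^*$, $E^*_iAE^*_j$ is $0$ if $|i-j|>1$ and nonzero if $|i-j|=1$, and $E_iA^*E_j$ is $0$ if $|i-j|>1$ and nonzero if $|i-j|=1$. *)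

theory Defs
  imports "Jordan_Normal_Form.DL_Rank" "Jordan_Normal_Form.Char_Poly"
begin

text \<open>V = F^(d+1) (column vectors), End(V) = (d+1) x (d+1) matrices over the field 'a.
  Families indexed by 0..d are functions on nat, only their values at i \<le> d matter.\<close>

definition mat_trace :: "'a::comm_ring_1 mat \<Rightarrow> 'a" where
  "mat_trace M = (\<Sum>i<dim_row M. M $$ (i,i))"

definition orth_idem_system :: "nat \<Rightarrow> (nat \<Rightarrow> 'a::field mat) \<Rightarrow> bool" where
  "orth_idem_system d Es \<longleftrightarrow>
     (\<forall>i\<le>d. Es i \<in> carrier_mat (d+1) (d+1)) \<and>
     (\<forall>i\<le>d. \<forall>j\<le>d. Es i * Es j = (if i = j then Es i else 0\<^sub>m (d+1) (d+1))) \<and>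
     (\<forall>i\<le>d. vec_space.rank (d+1) (Es i) = 1)"

definition mult_free :: "nat \<Rightarrow> 'a::field mat \<Rightarrow> (nat \<Rightarrow> 'a) \<Rightarrow> bool" where
  "mult_free d A th \<longleftrightarrow> A \<in> carrier_mat (d+1) (d+1) \<and> inj_on th {0..d} \<and>
     (\<forall>i\<le>d. eigenvalue A (th i))"

text \<open>E is the projection onto the th i-eigenspace of A along the other eigenspaces.\<close>
definition prim_idem :: "nat \<Rightarrow> 'a::field mat \<Rightarrow> (nat \<Rightarrow> 'a) \<Rightarrow> nat \<Rightarrow> 'a mat \<Rightarrow> bool" where
  "prim_idem d A th i E \<longleftrightarrow> E \<in> carrier_mat (d+1) (d+1) \<and>
     (\<forall>v\<in>carrier_vec (d+1). A *\<^sub>v (E *\<^sub>v v) = th i \<cdot>\<^sub>v (E *\<^sub>v v)) \<and>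
     (\<forall>v\<in>carrier_vec (d+1). A *\<^sub>v v = th i \<cdot>\<^sub>v v \<longrightarrow> E *\<^sub>v v = v) \<and>
     (\<forall>j\<le>d. j \<noteq> i \<longrightarrow> (\<forall>v\<in>carrier_vec (d+1). A *\<^sub>v v = th j \<cdot>\<^sub>v v \<longrightarrow> E *\<^sub>v v = 0\<^sub>v (d+1)))"

definition tridiag_wrt :: "nat \<Rightarrow> (nat \<Rightarrow> 'a::field mat) \<Rightarrow> 'a mat \<Rightarrow> bool" where
  "tridiag_wrt d F B \<longleftrightarrow>
     (\<forall>i\<le>d. \<forall>j\<le>d. (i > j + 1 \<or> j > i + 1) \<longrightarrow> F i * B * F j = 0\<^sub>m (d+1) (d+1)) \<and>
     (\<forall>i\<le>d. \<forall>j\<le>d. (i = j + 1 \<or> j = i + 1) \<longrightarrow> F i * B * F j \<noteq> 0\<^sub>m (d+1) (d+1))"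

definition mat_lincomb :: "nat \<Rightarrow> (nat \<Rightarrow> 'a::field) \<Rightarrow> (nat \<Rightarrow> 'a mat) \<Rightarrow> 'a mat" where
  "mat_lincomb d c M = mat (d+1) (d+1) (\<lambda>rc. \<Sum>i\<in>{0..d}. c i * (M i $$ rc))"

definition leonard_system :: "nat \<Rightarrow> 'a::field mat \<Rightarrow> (nat \<Rightarrow> 'a mat) \<Rightarrow> 'a mat \<Rightarrow> (nat \<Rightarrow> 'a mat) \<Rightarrow> bool" where
  "leonard_system d A E As Es \<longleftrightarrow>
     (\<exists>th ths. mult_free d A th \<and> mult_free d As ths \<and>
        (\<forall>i\<le>d. prim_idem d A th i (E i)) \<and> (\<forall>i\<le>d. prim_idem d As ths i (Es i))) \<and>
     tridiag_wrt d Es A \<and> tridiag_wrt d E As"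

end

theory Submission
  imports Defs
begin

text \<open>
  Write \<open>A\<close> in a basis of eigenvectors of \<open>A\<^sup>*\<close> and \<open>A\<^sup>*\<close> in a basis of
  eigenvectors of \<open>A\<close>. The first matrix \<open>T\<close> is irreducible tridiagonal with zero diagonal
  (bipartite), the second \<open>M\<close> is irreducible tridiagonal, and the change of basis \<open>P\<close> satisfies
  \<open>P T = diag(\<theta>) P\<close> and \<open>P diag(\<theta>\<^sup>*) = M P\<close>. Applying \<open>P\<close> to the vectors
  \<open>w\<^sub>k = (T - \<theta>\<^sub>k\<^sub>-\<^sub>1) \<dots> (T - \<theta>\<^sub>0) e\<^sub>0\<close> computes the diagonal of \<open>M\<close>:
  \<open>a\<^sup>*\<^sub>i = \<theta>\<^sup>*\<^sub>i + \<phi>\<^sub>i / (\<theta>\<^sub>i - \<theta>\<^sub>i\<^sub>-\<^sub>1) - \<phi>\<^sub>i\<^sub>+\<^sub>1 / (\<theta>\<^sub>i\<^sub>+\<^sub>1 - \<theta>\<^sub>i)\<close>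
  with \<open>\<phi>\<^sub>i = (\<theta>\<^sup>*\<^sub>i - \<theta>\<^sup>*\<^sub>i\<^sub>-\<^sub>1) (\<theta>\<^sub>0 + \<dots> + \<theta>\<^sub>i\<^sub>-\<^sub>1)\<close>.
  Listing the \<open>E\<^sup>*\<^sub>i\<close> in reverse order leaves \<open>M\<close> unchanged but replaces \<open>\<theta>\<^sup>*\<^sub>i\<close> by
  \<open>\<theta>\<^sup>*\<^sub>d\<^sub>-\<^sub>i\<close>. As \<open>a\<^sup>*\<^sub>i\<close> is linear in \<open>\<theta>\<^sup>*\<close>, the sequence
  \<open>\<theta>\<^sup>*\<^sub>i - \<theta>\<^sup>*\<^sub>d\<^sub>-\<^sub>i\<close> solves the second order recurrence \<open>a\<^sup>*\<^sub>i = 0\<close>, which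
  \<open>\<theta>\<^sub>i\<close> solves as well; a solution is determined by its value at \<open>0\<close>, so the two
  sequences are proportional.
\<close>

section \<open>Change of basis\<close>

definition inverse_mats :: "nat \<Rightarrow> 'a::semiring_1 mat \<Rightarrow> 'a mat \<Rightarrow> bool" where
  "inverse_mats n B Bi \<longleftrightarrow>
     B \<in> carrier_mat n n \<and> Bi \<in> carrier_mat n n \<and> B * Bi = 1\<^sub>m n \<and> Bi * B = 1\<^sub>m n"

definition mat_diag_unit :: "nat \<Rightarrow> nat \<Rightarrow> 'a::zero_neq_one mat" where
  "mat_diag_unit n j = mat_diag n (\<lambda>i. if i = j then 1 else 0)"

lemma mat_diag_unit_carrier [simp]: "mat_diag_unit n j \<in> carrier_mat n n"
  and mat_diag_unit_dim [simp]: "dim_row (mat_diag_unit n j) = n" "dim_col (mat_diag_unit n j) = n"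
  by (simp_all add: mat_diag_unit_def mat_diag_def)

lemma mat_trace_mult_comm:
  fixes X Y :: "'a::comm_ring_1 mat"
  assumes "X \<in> carrier_mat n m" and "Y \<in> carrier_mat m n"
  shows "mat_trace (X * Y) = mat_trace (Y * X)"
proof -
  have "mat_trace (X * Y) = (\<Sum>i<n. \<Sum>k<m. X $$ (i, k) * Y $$ (k, i))"
    using assms by (simp add: mat_trace_def scalar_prod_def lessThan_atLeast0)
  also have "\<dots> = (\<Sum>k<m. \<Sum>i<n. Y $$ (k, i) * X $$ (i, k))"
    by (subst sum.swap) (simp add: mult.commute)
  also have "\<dots> = mat_trace (Y * X)"
    using assms by (simp add: mat_trace_def scalar_prod_def lessThan_atLeast0)
  finally show ?thesis .
qed

lemma mat_diag_unit_sandwich_eq_0_iff: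
  fixes Y :: "'a::semiring_1 mat"
  assumes "Y \<in> carrier_mat n n" and "j < n" and "m < n"
  shows "mat_diag_unit n j * Y * mat_diag_unit n m = 0\<^sub>m n n \<longleftrightarrow> Y $$ (j, m) = 0"
proof -
  have eq: "mat_diag_unit n j * Y * mat_diag_unit n m
      = mat n n (\<lambda>(r, c). if r = j \<and> c = m then Y $$ (j, m) else 0)"
    unfolding mat_diag_unit_def mat_diag_mult_left[OF assms(1)]
    by (subst mat_diag_mult_right[of _ n n]) (auto intro!: eq_matI)
  show ?thesis
  proof
    assume "mat_diag_unit n j * Y * mat_diag_unit n m = 0\<^sub>m n n"
    then have "mat n n (\<lambda>(r, c). if r = j \<and> c = m then Y $$ (j, m) else 0) $$ (j, m) = 0"
      using eq assms by simp
    then show "Y $$ (j, m) = 0" using assms by simp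
  qed (auto simp: eq intro!: eq_matI)
qed

lemma mat_trace_mat_diag_unit_mult:
  fixes Y :: "'a::comm_ring_1 mat"
  assumes "Y \<in> carrier_mat n n" and "j < n"
  shows "mat_trace (mat_diag_unit n j * Y) = Y $$ (j, j)"
  using assms
  by (simp add: mat_trace_def mat_diag_unit_def mat_diag_mult_left if_distrib[of "\<lambda>x. x * _"]
      cong: if_cong)

lemma inverse_mats_D:
  assumes "inverse_mats n B Bi"
  shows "B \<in> carrier_mat n n" "Bi \<in> carrier_mat n n" "B * Bi = 1\<^sub>m n" "Bi * B = 1\<^sub>m n"
  using assms by (simp_all add: inverse_mats_def)

lemma inverse_mats_cancel:
  assumes "inverse_mats n B Bi" and "X \<in> carrier_mat n k"
  shows "B * (Bi * X) = X" and "Bi * (B * X) = X"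
  using inverse_mats_D[OF assms(1)] assms(2) by (simp_all flip: assoc_mult_mat)

lemma inverse_mats_conj_mult:
  assumes "inverse_mats n B Bi" and "X \<in> carrier_mat n n" and "Y \<in> carrier_mat n n"
  shows "Bi * (X * Y) * B = (Bi * X * B) * (Bi * Y * B)"
  using inverse_mats_D[OF assms(1)] assms(2,3) inverse_mats_cancel[OF assms(1), of "Y * B" n]
  by (simp add: assoc_mult_mat[of _ n n _ n _ n])

lemma inverse_mats_conj_eq_0_iff:
  assumes "inverse_mats n B Bi" and "X \<in> carrier_mat n n"
  shows "Bi * X * B = 0\<^sub>m n n \<longleftrightarrow> X = 0\<^sub>m n n"
proof
  note B = inverse_mats_D[OF assms(1)]
  assume "Bi * X * B = 0\<^sub>m n n"
  then have "B * (Bi * X * B) * Bi = 0\<^sub>m n n" using B by simp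
  then show "X = 0\<^sub>m n n"
    using B assms(2) inverse_mats_cancel[OF assms(1), of "X * (B * Bi)" n]
    by (simp add: assoc_mult_mat[of _ n n _ n _ n])
qed (use inverse_mats_D[OF assms(1)] in simp)

lemma inverse_mats_conj_eq:
  assumes "inverse_mats n B Bi" and "X \<in> carrier_mat n n" and "D \<in> carrier_mat n n"
    and "X * B = B * D"
  shows "Bi * X * B = D"
  using inverse_mats_D[OF assms(1)] assms(2,4) inverse_mats_cancel(2)[OF assms(1,3)] by simp

lemma inverse_mats_conj_trace:
  assumes "inverse_mats n B Bi" and "X \<in> carrier_mat n n"
  shows "mat_trace (Bi * X * B) = mat_trace X"
proof -
  have "mat_trace (Bi * X * B) = mat_trace (B * (Bi * X))"
    using inverse_mats_D[OF assms(1)] assms(2) by (intro mat_trace_mult_comm) auto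
  also have "B * (Bi * X) = X" using inverse_mats_cancel(1)[OF assms] .
  finally show ?thesis .
qed

lemma idem_sandwich_eq_0_iff:
  assumes BBi: "inverse_mats n B Bi"
    and "P \<in> carrier_mat n n" "Q \<in> carrier_mat n n" "X \<in> carrier_mat n n"
    and "Bi * P * B = mat_diag_unit n j" "Bi * Q * B = mat_diag_unit n m" and "j < n" "m < n"
  shows "P * X * Q = 0\<^sub>m n n \<longleftrightarrow> (Bi * X * B) $$ (j, m) = 0"
proof -
  have "Bi * X * B \<in> carrier_mat n n" using assms(1,4) by (auto simp: inverse_mats_def)
  moreover have "Bi * (P * X * Q) * B = mat_diag_unit n j * (Bi * X * B) * mat_diag_unit n m"
    unfolding inverse_mats_conj_mult[OF BBi mult_carrier_mat[OF assms(2,4)] assms(3)]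
      inverse_mats_conj_mult[OF BBi assms(2,4)] assms(5,6) ..
  ultimately show ?thesis
    using inverse_mats_conj_eq_0_iff[OF BBi, of "P * X * Q"] mat_diag_unit_sandwich_eq_0_iff assms
    by auto
qed

lemma mat_trace_idem_mult:
  assumes BBi: "inverse_mats n B Bi" and "P \<in> carrier_mat n n" "X \<in> carrier_mat n n"
    and "Bi * P * B = mat_diag_unit n j" and "j < n"
  shows "mat_trace (P * X) = (Bi * X * B) $$ (j, j)"
proof -
  have "mat_trace (P * X) = mat_trace (Bi * (P * X) * B)"
    using inverse_mats_conj_trace[OF BBi] assms(2,3) by simp
  also have "\<dots> = mat_trace (mat_diag_unit n j * (Bi * X * B))"
    unfolding inverse_mats_conj_mult[OF BBi assms(2,3)] assms(4) ..
  also have "\<dots> = (Bi * X * B) $$ (j, j)"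
    using assms by (intro mat_trace_mat_diag_unit_mult) (auto simp: inverse_mats_def)
  finally show ?thesis .
qed

section \<open>Diagonalization by primitive idempotents\<close>

lemma mat_diag_unit_mult_vec:
  fixes B :: "'a::comm_semiring_1 mat"
  assumes "B \<in> carrier_mat n n" and "v \<in> carrier_vec n" and "j < n"
  shows "(B * mat_diag_unit n j) *\<^sub>v v = v $ j \<cdot>\<^sub>v col B j"
  using assms
  by (intro eq_vecI) (auto simp: mat_diag_unit_def mat_diag_mult_right scalar_prod_def
      if_distrib[of "\<lambda>x. _ * x"] if_distrib[of "\<lambda>x. x * _"] mult.commute cong: if_cong)

lemma det_neq_0_if_idems_split_cols:
  fixes B :: "'a::field mat"
  assumes B: "B \<in> carrier_mat n n" and cols: "\<And>j. j < n \<Longrightarrow> col B j \<noteq> 0\<^sub>v n"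
    and P: "\<And>j. j < n \<Longrightarrow> P j \<in> carrier_mat n n"
    and PB: "\<And>j. j < n \<Longrightarrow> P j * B = B * mat_diag_unit n j"
  shows "det B \<noteq> 0"
proof
  assume "det B = 0"
  then obtain v where v: "v \<in> carrier_vec n" "v \<noteq> 0\<^sub>v n" "B *\<^sub>v v = 0\<^sub>v n"
    using det_0_iff_vec_prod_zero[OF B] by auto
  have "v $ j = 0" if j: "j < n" for j
  proof (rule ccontr)
    assume "v $ j \<noteq> 0"
    have "v $ j \<cdot>\<^sub>v col B j = (P j * B) *\<^sub>v v"
      using mat_diag_unit_mult_vec[OF B v(1) j] PB[OF j] by simp
    also have "\<dots> = P j *\<^sub>v 0\<^sub>v n"
      using P[OF j] B v by simp
    also have "\<dots> = 0\<^sub>v n"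
      using P[OF j] by (intro eq_vecI) auto
    finally have "col B j = 0\<^sub>v n"
      using \<open>v $ j \<noteq> 0\<close> B by (auto simp: vec_eq_iff)
    then show False using cols[OF j] by simp
  qed
  then have "v = 0\<^sub>v n" using v(1) by (intro eq_vecI) auto
  then show False using v(2) by simp
qed

lemma inverse_mats_if_det_neq_0:
  fixes B :: "'a::field mat"
  assumes "B \<in> carrier_mat n n" and "det B \<noteq> 0"
  shows "\<exists>Bi. inverse_mats n B Bi"
  using det_non_zero_imp_unit[OF assms, of undefined]
  by (auto simp: Units_def ring_mat_def inverse_mats_def)

lemma prim_idems_eigenvector_mat:
  fixes M :: "'a::field mat"
  assumes mf: "mult_free d M lam" and P: "\<forall>j\<le>d. prim_idem d M lam j (P j)"
  obtains B where "B \<in> carrier_mat (d + 1) (d + 1)" and "\<And>j. j \<le> d \<Longrightarrow> col B j \<noteq> 0\<^sub>v (d + 1)"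
    and "\<And>j. j \<le> d \<Longrightarrow> P j * B = B * mat_diag_unit (d + 1) j" and "M * B = B * mat_diag (d + 1) lam"
proof -
  let ?n = "d + 1"
  have M: "M \<in> carrier_mat ?n ?n" using mf by (simp add: mult_free_def)
  have P_carrier: "P j \<in> carrier_mat ?n ?n" if "j \<le> d" for j
    using P that by (simp add: prim_idem_def)
  have "\<forall>j\<le>d. \<exists>v. eigenvector M v (lam j)" using mf by (simp add: mult_free_def eigenvalue_def)
  then obtain b where "\<And>j. j \<le> d \<Longrightarrow> eigenvector M (b j) (lam j)" by metis
  then have b: "b j \<in> carrier_vec ?n" "b j \<noteq> 0\<^sub>v ?n" "M *\<^sub>v b j = lam j \<cdot>\<^sub>v b j" if "j \<le> d" for j
    using that M by (auto simp: eigenvector_def)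
  define B where "B = mat ?n ?n (\<lambda>(r, c). b c $ r)"
  have B: "B \<in> carrier_mat ?n ?n" by (simp add: B_def)
  have B_entry: "B $$ (r, k) = b k $ r" if "r < ?n" "k < ?n" for r k
    using that by (simp add: B_def)
  have col_B: "col B k = b k" if "k \<le> d" for k
    using that b(1)[OF that] by (intro eq_vecI) (auto simp: B_def)
  have P_b: "P j *\<^sub>v b k = (if k = j then b k else 0\<^sub>v ?n)" if "j \<le> d" "k \<le> d" for j k
    using P b that by (auto simp: prim_idem_def)
  have "P j * B = B * mat_diag_unit ?n j" if j: "j \<le> d" for j
  proof (rule eq_matI)
    fix r k assume "r < dim_row (B * mat_diag_unit ?n j)" "k < dim_col (B * mat_diag_unit ?n j)"
    then have rk: "r < ?n" "k < ?n" using B by simp_all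
    have "(P j * B) $$ (r, k) = (P j *\<^sub>v b k) $ r"
      using rk B P_carrier[OF j] col_B[of k] by simp
    then show "(P j * B) $$ (r, k) = (B * mat_diag_unit ?n j) $$ (r, k)"
      unfolding mat_diag_unit_def mat_diag_mult_right[OF B]
      using rk P_b[OF j, of k] b(1)[of k] by (simp add: B_entry)
  qed (use P_carrier[OF j] B in simp_all)
  moreover have "M * B = B * mat_diag ?n lam"
  proof (rule eq_matI)
    fix r k assume "r < dim_row (B * mat_diag ?n lam)" "k < dim_col (B * mat_diag ?n lam)"
    then have rk: "r < ?n" "k < ?n" using B by (simp_all add: mat_diag_def)
    have "(M * B) $$ (r, k) = (M *\<^sub>v b k) $ r"
      using rk B M col_B[of k] by simp
    then show "(M * B) $$ (r, k) = (B * mat_diag ?n lam) $$ (r, k)"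
      unfolding mat_diag_mult_right[OF B] using rk b[of k] by (simp add: B_entry mult.commute)
  qed (use M B in \<open>simp_all add: mat_diag_def\<close>)
  ultimately show ?thesis using that B col_B b(2) by simp
qed

lemma prim_idems_diagonalize:
  fixes M :: "'a::field mat"
  assumes mf: "mult_free d M lam" and P: "\<forall>j\<le>d. prim_idem d M lam j (P j)"
  shows "\<exists>B Bi. inverse_mats (d + 1) B Bi \<and> (\<forall>j\<le>d. Bi * P j * B = mat_diag_unit (d + 1) j)
    \<and> Bi * M * B = mat_diag (d + 1) lam"
proof -
  let ?n = "d + 1"
  obtain B where B: "B \<in> carrier_mat ?n ?n" "\<And>j. j \<le> d \<Longrightarrow> col B j \<noteq> 0\<^sub>v ?n"
    and PB: "\<And>j. j \<le> d \<Longrightarrow> P j * B = B * mat_diag_unit ?n j" and MB: "M * B = B * mat_diag ?n lam"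
    using prim_idems_eigenvector_mat[OF assms] by blast
  have M: "M \<in> carrier_mat ?n ?n" and P_carrier: "\<And>j. j \<le> d \<Longrightarrow> P j \<in> carrier_mat ?n ?n"
    using mf P by (simp_all add: mult_free_def prim_idem_def)
  have "det B \<noteq> 0"
    using B P_carrier PB by (intro det_neq_0_if_idems_split_cols[where P = P]) auto
  then obtain Bi where Bi: "inverse_mats ?n B Bi" using inverse_mats_if_det_neq_0[OF B(1)] by blast
  have "Bi * P j * B = mat_diag_unit ?n j" if "j \<le> d" for j
    using inverse_mats_conj_eq[OF Bi P_carrier[OF that] _ PB[OF that]] by simp
  moreover have "Bi * M * B = mat_diag ?n lam"
    using inverse_mats_conj_eq[OF Bi M _ MB] by simp
  ultimately show ?thesis using Bi by blast
qed

lemma inverse_mats_mult: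
  assumes C: "inverse_mats n C Ci" and B: "inverse_mats n B Bi"
  shows "inverse_mats n (Ci * B) (Bi * C)"
proof -
  note C' = inverse_mats_D[OF C] and B' = inverse_mats_D[OF B]
  have "Ci * B * (Bi * C) = Ci * (B * (Bi * C))"
    using C' B' by (intro assoc_mult_mat[of _ n n _ n _ n]) auto
  also have "\<dots> = 1\<^sub>m n" using inverse_mats_cancel(1)[OF B C'(1)] C'(4) by simp
  finally have "Ci * B * (Bi * C) = 1\<^sub>m n" .
  moreover have "Bi * C * (Ci * B) = Bi * (C * (Ci * B))"
    using C' B' by (intro assoc_mult_mat[of _ n n _ n _ n]) auto
  moreover have "\<dots> = 1\<^sub>m n" using inverse_mats_cancel(1)[OF C B'(1)] B'(4) by simp
  ultimately show ?thesis using C' B' by (simp add: inverse_mats_def)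
qed

lemma inverse_mats_change_basis:
  assumes C: "inverse_mats n C Ci" and B: "inverse_mats n B Bi" and X: "X \<in> carrier_mat n n"
  shows "(Ci * B) * (Bi * X * B) = (Ci * X * C) * (Ci * B)"
proof -
  note C' = inverse_mats_D[OF C] and B' = inverse_mats_D[OF B]
  have "(Ci * B) * (Bi * X * B) = Ci * (B * (Bi * (X * B)))"
    using C' B' X by (simp add: assoc_mult_mat[of _ n n _ n _ n])
  also have "\<dots> = Ci * (X * (C * (Ci * B)))"
    using inverse_mats_cancel(1)[OF B, of "X * B" n] inverse_mats_cancel(1)[OF C B'(1)] X B'(1)
    by simp
  also have "\<dots> = (Ci * X * C) * (Ci * B)"
    using C' B' X by (simp add: assoc_mult_mat[of _ n n _ n _ n])
  finally show ?thesis .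
qed

lemma inverse_mats_row_neq_0:
  assumes "inverse_mats n P Q" and "j < n"
  shows "\<exists>l<n. P $$ (j, l) \<noteq> 0"
proof (rule ccontr)
  assume "\<not> ?thesis"
  then have "(P * Q) $$ (j, j) = 0"
    using inverse_mats_D(1,2)[OF assms(1)] assms(2) by (simp add: scalar_prod_def)
  then show False using inverse_mats_D(3)[OF assms(1)] assms(2) by simp
qed

lemma mat_mult_entry_sum:
  assumes "X \<in> carrier_mat (d + 1) (d + 1)" and "Y \<in> carrier_mat (d + 1) (d + 1)"
    and "j \<le> d" and "l \<le> d"
  shows "(X * Y) $$ (j, l) = (\<Sum>m=0..d. X $$ (j, m) * Y $$ (m, l))"
  using assms by (simp add: scalar_prod_def atLeastLessThanSuc_atLeastAtMost)

lemma mat_lincomb_cong: "(\<And>i. i \<le> d \<Longrightarrow> F i = G i) \<Longrightarrow> mat_lincomb d c F = mat_lincomb d c G"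
  unfolding mat_lincomb_def by (auto intro!: sum.cong)

lemma mat_lincomb_mult_left:
  assumes X: "X \<in> carrier_mat (d + 1) (d + 1)"
    and F: "\<And>i. i \<le> d \<Longrightarrow> F i \<in> carrier_mat (d + 1) (d + 1)"
  shows "X * mat_lincomb d c F = mat_lincomb d c (\<lambda>i. X * F i)"
proof (rule eq_matI)
  fix r s assume "r < dim_row (mat_lincomb d c (\<lambda>i. X * F i))"
    and "s < dim_col (mat_lincomb d c (\<lambda>i. X * F i))"
  then have rs: "r \<le> d" "s \<le> d" by (simp_all add: mat_lincomb_def)
  have "(X * mat_lincomb d c F) $$ (r, s) = (\<Sum>k=0..d. \<Sum>i=0..d. c i * (X $$ (r, k) * F i $$ (k, s)))"
    using X rs by (subst mat_mult_entry_sum) (auto simp: mat_lincomb_def sum_distrib_left mult_ac)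
  also have "\<dots> = (\<Sum>i=0..d. \<Sum>k=0..d. c i * (X $$ (r, k) * F i $$ (k, s)))"
    by (rule sum.swap)
  also have "\<dots> = (\<Sum>i=0..d. c i * (X * F i) $$ (r, s))"
    using mat_mult_entry_sum[OF X F rs] by (intro sum.cong refl) (simp add: sum_distrib_left)
  finally show "(X * mat_lincomb d c F) $$ (r, s) = mat_lincomb d c (\<lambda>i. X * F i) $$ (r, s)"
    using rs by (simp add: mat_lincomb_def)
qed (use X in \<open>simp_all add: mat_lincomb_def\<close>)

lemma mat_lincomb_mult_right:
  assumes X: "X \<in> carrier_mat (d + 1) (d + 1)"
    and F: "\<And>i. i \<le> d \<Longrightarrow> F i \<in> carrier_mat (d + 1) (d + 1)"
  shows "mat_lincomb d c F * X = mat_lincomb d c (\<lambda>i. F i * X)"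
proof (rule eq_matI)
  fix r s assume "r < dim_row (mat_lincomb d c (\<lambda>i. F i * X))"
    and "s < dim_col (mat_lincomb d c (\<lambda>i. F i * X))"
  then have rs: "r \<le> d" "s \<le> d" by (simp_all add: mat_lincomb_def)
  have "(mat_lincomb d c F * X) $$ (r, s) = (\<Sum>k=0..d. \<Sum>i=0..d. c i * (F i $$ (r, k) * X $$ (k, s)))"
    using X rs
    by (subst mat_mult_entry_sum) (auto simp: mat_lincomb_def sum_distrib_left sum_distrib_right mult_ac)
  also have "\<dots> = (\<Sum>i=0..d. \<Sum>k=0..d. c i * (F i $$ (r, k) * X $$ (k, s)))"
    by (rule sum.swap)
  also have "\<dots> = (\<Sum>i=0..d. c i * (F i * X) $$ (r, s))"
    using mat_mult_entry_sum[OF F X rs] by (intro sum.cong refl) (simp add: sum_distrib_left)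
  finally show "(mat_lincomb d c F * X) $$ (r, s) = mat_lincomb d c (\<lambda>i. F i * X) $$ (r, s)"
    using rs by (simp add: mat_lincomb_def)
qed (use X in \<open>simp_all add: mat_lincomb_def\<close>)

lemma mat_lincomb_mat_diag_unit: "mat_lincomb d c (mat_diag_unit (d + 1)) = mat_diag (d + 1) c"
proof (rule eq_matI)
  fix r s assume "r < dim_row (mat_diag (d + 1) c)" "s < dim_col (mat_diag (d + 1) c)"
  then have "r \<le> d" "s \<le> d" by (simp_all add: mat_diag_def)
  then show "mat_lincomb d c (mat_diag_unit (d + 1)) $$ (r, s) = mat_diag (d + 1) c $$ (r, s)"
    by (cases "r = s")
      (simp_all add: mat_lincomb_def mat_diag_unit_def mat_diag_def if_distrib[of "\<lambda>x. _ * x"]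
        cong: if_cong)
qed (simp_all add: mat_lincomb_def mat_diag_def)

lemma mat_lincomb_conj:
  assumes B: "inverse_mats (d + 1) B Bi" and F: "\<And>i. i \<le> d \<Longrightarrow> F i \<in> carrier_mat (d + 1) (d + 1)"
    and diag: "\<And>i. i \<le> d \<Longrightarrow> Bi * F i * B = mat_diag_unit (d + 1) i"
  shows "Bi * mat_lincomb d c F * B = mat_diag (d + 1) c"
proof -
  note B' = inverse_mats_D[OF B]
  have "Bi * mat_lincomb d c F * B = mat_lincomb d c (\<lambda>i. Bi * F i * B)"
    using B' F by (simp add: mat_lincomb_mult_left mat_lincomb_mult_right)
  also have "\<dots> = mat_lincomb d c (mat_diag_unit (d + 1))"
    using diag by (intro mat_lincomb_cong) auto
  also have "\<dots> = mat_diag (d + 1) c"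
    by (rule mat_lincomb_mat_diag_unit)
  finally show ?thesis .
qed

lemma tridiag_wrt_conj:
  assumes B: "inverse_mats (d + 1) B Bi" and F: "\<And>j. j \<le> d \<Longrightarrow> F j \<in> carrier_mat (d + 1) (d + 1)"
    and diag: "\<And>j. j \<le> d \<Longrightarrow> Bi * F j * B = mat_diag_unit (d + 1) j"
    and X: "X \<in> carrier_mat (d + 1) (d + 1)" and tri: "tridiag_wrt d F X" and jm: "j \<le> d" "m \<le> d"
  shows "m + 1 < j \<or> j + 1 < m \<Longrightarrow> (Bi * X * B) $$ (j, m) = 0"
    and "j = m + 1 \<or> m = j + 1 \<Longrightarrow> (Bi * X * B) $$ (j, m) \<noteq> 0"
proof -
  have iff: "F j * X * F m = 0\<^sub>m (d + 1) (d + 1) \<longleftrightarrow> (Bi * X * B) $$ (j, m) = 0"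
    using jm by (intro idem_sandwich_eq_0_iff[OF B F F X diag diag]) auto
  show "m + 1 < j \<or> j + 1 < m \<Longrightarrow> (Bi * X * B) $$ (j, m) = 0"
    using tri jm iff unfolding tridiag_wrt_def by auto
  show "j = m + 1 \<or> m = j + 1 \<Longrightarrow> (Bi * X * B) $$ (j, m) \<noteq> 0"
    using tri jm iff unfolding tridiag_wrt_def by auto
qed

section \<open>The sequences \<open>\<phi>\<close> and \<open>a\<^sup>*\<close>\<close>

text \<open>
  At \<open>i = 0\<close> the term \<open>\<phi>\<^sub>0 / (\<theta>\<^sub>0 - \<theta>\<^sub>0)\<close> is \<open>0 / 0 = 0\<close>,
  matching the convention \<open>\<phi>\<^sub>0 = 0\<close>.
\<close>

definition bipartite_phi :: "(nat \<Rightarrow> 'a::field) \<Rightarrow> (nat \<Rightarrow> 'a) \<Rightarrow> nat \<Rightarrow> 'a" where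
  "bipartite_phi th ths k = (ths k - ths (k - 1)) * (\<Sum>h<k. th h)"

definition bipartite_astar :: "(nat \<Rightarrow> 'a::field) \<Rightarrow> (nat \<Rightarrow> 'a) \<Rightarrow> nat \<Rightarrow> 'a" where
  "bipartite_astar th ths i = ths i + bipartite_phi th ths i / (th i - th (i - 1))
     - bipartite_phi th ths (i + 1) / (th (i + 1) - th i)"

lemma bipartite_phi_linear:
  "bipartite_phi th (\<lambda>k. a * f k - b * g k) k = a * bipartite_phi th f k - b * bipartite_phi th g k"
  unfolding bipartite_phi_def by (simp add: algebra_simps)

lemma bipartite_astar_linear:
  "bipartite_astar th (\<lambda>k. a * f k - b * g k) i
    = a * bipartite_astar th f i - b * bipartite_astar th g i"
  unfolding bipartite_astar_def bipartite_phi_linear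
  by (simp add: algebra_simps diff_divide_distrib)

lemma bipartite_phi_self_div:
  assumes "inj_on th {0..d}" and "k \<le> d"
  shows "bipartite_phi th th k / (th k - th (k - 1)) = (\<Sum>h<k. th h)"
proof (cases "k = 0")
  case False
  with assms have "th k - th (k - 1) \<noteq> 0" by (auto dest: inj_onD)
  then show ?thesis by (simp add: bipartite_phi_def)
qed (simp add: bipartite_phi_def)

lemma bipartite_astar_self:
  assumes "inj_on th {0..d}" and "i < d"
  shows "bipartite_astar th th i = 0"
  using bipartite_phi_self_div[OF assms(1), of i] bipartite_phi_self_div[OF assms(1), of "i + 1"]
    assms(2)
  by (simp add: bipartite_astar_def)

lemma bipartite_astar_eq_0_imp_eq_0:
  assumes inj: "inj_on th {0..d}" and sums: "\<And>k. 0 < k \<Longrightarrow> k \<le> d \<Longrightarrow> (\<Sum>h<k. th h) \<noteq> 0"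
    and astar: "\<And>i. i < d \<Longrightarrow> bipartite_astar th y i = 0" and "y 0 = 0"
  shows "k \<le> d \<Longrightarrow> y k = 0"
proof (induction k rule: less_induct)
  case (less k)
  show ?case
  proof (cases k)
    case (Suc i)
    have "y i = 0" "y (i - 1) = 0" using less Suc by auto
    then have "bipartite_astar th y i = - (y k * (\<Sum>h<k. th h) / (th k - th i))"
      using Suc by (simp add: bipartite_astar_def bipartite_phi_def)
    moreover have "th k - th i \<noteq> 0" using inj less.prems Suc by (auto dest: inj_onD)
    ultimately show ?thesis using astar[of i] sums[of k] less.prems Suc by simp
  qed (simp add: \<open>y 0 = 0\<close>)
qed

lemma recurrence_if_bipartite_astar_reverse_eq:
  assumes inj: "inj_on th {0..d}" and sums: "\<And>k. 0 < k \<Longrightarrow> k \<le> d \<Longrightarrow> (\<Sum>h<k. th h) \<noteq> 0"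
    and astar: "\<And>i. i < d \<Longrightarrow> bipartite_astar th ths i = bipartite_astar th (\<lambda>k. ths (d - k)) i"
  shows "\<forall>i<d. th i * (ths (d - i - 1) - ths (i + 1)) = th (i + 1) * (ths (d - i) - ths i)"
proof (intro allI impI)
  fix i assume i: "i < d"
  define y where "y = (\<lambda>k. ths k - ths (d - k))"
  define z where "z = (\<lambda>k. th 0 * y k - y 0 * th k)"
  have "bipartite_astar th y j = 0" if "j < d" for j
    using astar[OF that] bipartite_astar_linear[of th 1 ths 1 "\<lambda>k. ths (d - k)" j]
    unfolding y_def by simp
  then have "bipartite_astar th z j = 0" if "j < d" for j
    using bipartite_astar_linear[of th "th 0" y "y 0" th j] bipartite_astar_self[OF inj that] that
    unfolding z_def by simp
  then have z: "z k = 0" if "k \<le> d" for k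
    using bipartite_astar_eq_0_imp_eq_0[OF inj sums, of z] that by (simp add: z_def)
  have "th 0 * (th i * y (i + 1)) = th i * (y 0 * th (i + 1))"
    using z[of "i + 1"] i by (simp add: z_def)
  also have "\<dots> = th 0 * (th (i + 1) * y i)"
    using z[of i] i by (simp add: z_def)
  finally have "th i * y (i + 1) = th (i + 1) * y i"
    using sums[of 1] i by simp
  then show "th i * (ths (d - i - 1) - ths (i + 1)) = th (i + 1) * (ths (d - i) - ths i)"
    by (simp add: y_def algebra_simps)
qed

section \<open>Coordinates of a bipartite Leonard system\<close>

lemma sum_tridiagonal:
  fixes f :: "nat \<Rightarrow> 'a::comm_monoid_add"
  assumes "j \<le> d" and "\<And>l. l \<le> d \<Longrightarrow> l + 1 < j \<or> j + 1 < l \<Longrightarrow> f l = 0"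
  shows "(\<Sum>l=0..d. f l) = (if j = 0 then 0 else f (j - 1)) + f j + (if j < d then f (j + 1) else 0)"
proof -
  let ?S = "{l. l \<le> d \<and> (l + 1 = j \<or> l = j \<or> l = j + 1)}"
  have "(\<Sum>l=0..d. f l) = (\<Sum>l\<in>?S. f l)"
    by (intro sum.mono_neutral_right) (auto intro!: assms(2))
  also have "?S = (if j = 0 then {} else {j - 1}) \<union> {j} \<union> (if j < d then {j + 1} else {})"
    using assms(1) by (auto split: if_splits)
  also have "(\<Sum>l\<in>\<dots>. f l)
      = (if j = 0 then 0 else f (j - 1)) + f j + (if j < d then f (j + 1) else 0)"
  proof (cases "j = 0")
    case False
    then have "j - 1 \<noteq> j + 1" "j - 1 \<noteq> j" by auto
    with False show ?thesis by (cases "j < d") (simp_all add: sum.union_disjoint ac_simps)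
  qed (cases "j < d"; simp add: ac_simps)
  finally show ?thesis .
qed

lemma sum_atLeastAtMost_reverse:
  fixes f :: "nat \<Rightarrow> 'a::comm_monoid_add"
  shows "(\<Sum>m=0..d. f (d - m)) = (\<Sum>m=0..d. f m)"
  using sum.atLeastAtMost_rev[of f 0 d] by simp

text \<open>
  \<open>T\<close> is the matrix of \<open>A\<close> in a basis of eigenvectors of \<open>A\<^sup>*\<close>, \<open>M\<close> the matrix of
  \<open>A\<^sup>*\<close> in a basis of eigenvectors of \<open>A\<close>, and \<open>P\<close> the change of basis between them.
  Matrices are functions on indices so that reversing the order of the \<open>E\<^sup>*\<^sub>i\<close> is a reindexing.
\<close>

locale bipartite_leonard_coords =
  fixes d :: nat and T P M :: "nat \<Rightarrow> nat \<Rightarrow> 'a::field" and th ths :: "nat \<Rightarrow> 'a"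
  assumes T_far: "\<lbrakk>j \<le> d; m \<le> d; m + 1 < j \<or> j + 1 < m\<rbrakk> \<Longrightarrow> T j m = 0"
    and T_adj: "\<lbrakk>j \<le> d; m \<le> d; j = m + 1 \<or> m = j + 1\<rbrakk> \<Longrightarrow> T j m \<noteq> 0"
    and T_diag: "j \<le> d \<Longrightarrow> T j j = 0"
    and M_far: "\<lbrakk>j \<le> d; m \<le> d; m + 1 < j \<or> j + 1 < m\<rbrakk> \<Longrightarrow> M j m = 0"
    and M_adj: "\<lbrakk>j \<le> d; m \<le> d; j = m + 1 \<or> m = j + 1\<rbrakk> \<Longrightarrow> M j m \<noteq> 0"
    and P_T: "\<lbrakk>j \<le> d; l \<le> d\<rbrakk> \<Longrightarrow> (\<Sum>m=0..d. P j m * T m l) = th j * P j l"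
    and P_ths: "\<lbrakk>j \<le> d; l \<le> d\<rbrakk> \<Longrightarrow> P j l * ths l = (\<Sum>m=0..d. M j m * P m l)"
    and P_row: "j \<le> d \<Longrightarrow> \<exists>l\<le>d. P j l \<noteq> 0"
    and th_inj: "inj_on th {0..d}"
begin

lemma T_sub: "\<lbrakk>0 < j; j \<le> d\<rbrakk> \<Longrightarrow> T j (j - 1) \<noteq> 0"
  by (rule T_adj) auto

lemma M_super: "j < d \<Longrightarrow> M j (j + 1) \<noteq> 0"
  by (rule M_adj) auto

lemma th_diff_neq_0: "\<lbrakk>j \<le> d; m \<le> d; j \<noteq> m\<rbrakk> \<Longrightarrow> th j - th m \<noteq> 0"
  using th_inj by (auto dest: inj_onD)

lemma T_column_sum:
  assumes "l \<le> d"
  shows "(\<Sum>m=0..d. c m * T m l) =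
    (if l = 0 then 0 else c (l - 1) * T (l - 1) l) + (if l < d then c (l + 1) * T (l + 1) l else 0)"
  using assms by (subst sum_tridiagonal[of l]) (auto simp: T_far T_diag)

text \<open>Row \<open>j\<close> of \<open>P\<close> is a left eigenvector of \<open>T\<close>, and since \<open>T\<close> is irreducible the
  column equations determine it from its first entry.\<close>

lemma P_first_col_neq_0:
  assumes j: "j \<le> d" shows "P j 0 \<noteq> 0"
proof
  assume P0: "P j 0 = 0"
  have step: "P j l = 0 \<and> P j (l + 1) = 0" if "l < d" for l
    using that
  proof (induction l)
    case 0
    then show ?case using P_T[OF j, of 0] T_column_sum[of 0 "P j"] T_sub[of 1] P0 by simp
  next
    case (Suc l)
    then have "P j (l + 1) = 0" "P j l = 0" by simp_all
    then show ?case
      using P_T[OF j, of "l + 1"] T_column_sum[of "l + 1" "P j"] T_sub[of "l + 2"] Suc.prems by simp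
  qed
  have "P j l = 0" if "l \<le> d" for l
  proof (cases l)
    case (Suc k)
    then show ?thesis using step[of k] that by simp
  qed (use P0 in simp)
  then show False using P_row[OF j] by blast
qed

definition T_apply :: "(nat \<Rightarrow> 'a) \<Rightarrow> nat \<Rightarrow> 'a" where
  "T_apply c m = (\<Sum>l=0..d. T m l * c l)"

definition P_apply :: "nat \<Rightarrow> (nat \<Rightarrow> 'a) \<Rightarrow> 'a" where
  "P_apply j c = (\<Sum>l=0..d. P j l * c l)"

lemma T_apply_eq:
  "m \<le> d \<Longrightarrow> T_apply c m =
    (if m = 0 then 0 else T m (m - 1) * c (m - 1)) + (if m < d then T m (m + 1) * c (m + 1) else 0)"
  unfolding T_apply_def by (subst sum_tridiagonal[of m]) (auto simp: T_far T_diag)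

lemma P_apply_cong: "(\<And>l. l \<le> d \<Longrightarrow> c l = c' l) \<Longrightarrow> P_apply j c = P_apply j c'"
  unfolding P_apply_def by (auto intro!: sum.cong)

lemma P_apply_add: "P_apply j (\<lambda>l. c l + c' l) = P_apply j c + P_apply j c'"
  unfolding P_apply_def by (simp add: algebra_simps sum.distrib)

lemma P_apply_diff: "P_apply j (\<lambda>l. c l - c' l) = P_apply j c - P_apply j c'"
  unfolding P_apply_def by (simp add: algebra_simps sum_subtractf)

lemma P_apply_scale: "P_apply j (\<lambda>l. a * c l) = a * P_apply j c"
  unfolding P_apply_def by (simp add: algebra_simps sum_distrib_left)

lemma P_apply_T_apply:
  assumes "j \<le> d" shows "P_apply j (T_apply c) = th j * P_apply j c"
proof -
  have "P_apply j (T_apply c) = (\<Sum>m=0..d. \<Sum>l=0..d. P j m * T m l * c l)"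
    unfolding P_apply_def T_apply_def by (simp add: sum_distrib_left mult.assoc)
  also have "\<dots> = (\<Sum>l=0..d. (\<Sum>m=0..d. P j m * T m l) * c l)"
    by (subst sum.swap) (simp add: sum_distrib_right)
  also have "\<dots> = th j * P_apply j c"
    using assms by (simp add: P_apply_def P_T sum_distrib_left mult.assoc)
  finally show ?thesis .
qed

lemma P_apply_ths:
  assumes "j \<le> d"
  shows "P_apply j (\<lambda>l. ths l * c l) =
    (if j = 0 then 0 else M j (j - 1) * P_apply (j - 1) c) + M j j * P_apply j c
      + (if j < d then M j (j + 1) * P_apply (j + 1) c else 0)"
proof -
  have "P_apply j (\<lambda>l. ths l * c l) = (\<Sum>l=0..d. (\<Sum>m=0..d. M j m * P m l) * c l)"
    using assms by (simp add: P_apply_def P_ths[symmetric] mult.assoc mult.left_commute)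
  also have "\<dots> = (\<Sum>m=0..d. \<Sum>l=0..d. M j m * P m l * c l)"
    by (subst sum.swap) (simp add: sum_distrib_right)
  also have "\<dots> = (\<Sum>m=0..d. M j m * P_apply m c)"
    unfolding P_apply_def by (simp add: sum_distrib_left mult.assoc)
  also have "\<dots> = (if j = 0 then 0 else M j (j - 1) * P_apply (j - 1) c) + M j j * P_apply j c
      + (if j < d then M j (j + 1) * P_apply (j + 1) c else 0)"
    using assms by (subst sum_tridiagonal[of j]) (auto simp: M_far)
  finally show ?thesis .
qed

primrec split_vec :: "nat \<Rightarrow> nat \<Rightarrow> 'a" where
  "split_vec 0 = (\<lambda>m. if m = 0 then 1 else 0)"
| "split_vec (Suc k) = (\<lambda>m. T_apply (split_vec k) m - th k * split_vec k m)"

declare split_vec.simps(2) [simp del]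

lemma split_vec_above: "\<lbrakk>k < m; m \<le> d\<rbrakk> \<Longrightarrow> split_vec k m = 0"
proof (induction k arbitrary: m)
  case (Suc k)
  then show ?case by (simp add: split_vec.simps(2) T_apply_eq)
qed simp

lemma split_vec_diag: "Suc k \<le> d \<Longrightarrow> split_vec (Suc k) (Suc k) = T (Suc k) k * split_vec k k"
  by (simp add: split_vec.simps(2) T_apply_eq split_vec_above)

lemma split_vec_diag_neq_0: "k \<le> d \<Longrightarrow> split_vec k k \<noteq> 0"
proof (induction k)
  case (Suc k)
  then show ?case using split_vec_diag T_sub[of "Suc k"] by simp
qed simp

lemma split_vec_below_diag:
  "\<lbrakk>0 < k; k \<le> d\<rbrakk> \<Longrightarrow> split_vec k (k - 1) = - (\<Sum>h<k. th h) * split_vec (k - 1) (k - 1)"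
proof (induction k)
  case (Suc k)
  show ?case
  proof (cases k)
    case (Suc i)
    have below: "split_vec k i = - (\<Sum>h<k. th h) * split_vec i i"
      using Suc.IH Suc.prems \<open>k = Suc i\<close> by simp
    have diag: "split_vec k k = T k i * split_vec i i"
      using split_vec_diag[of i] Suc.prems \<open>k = Suc i\<close> by simp
    have "split_vec (Suc k) k = T k i * split_vec k i - th k * split_vec k k"
      using Suc.prems \<open>k = Suc i\<close>
      by (simp add: split_vec.simps(2) T_apply_eq T_diag split_vec_above)
    also have "\<dots> = - (\<Sum>h<Suc k. th h) * split_vec k k"
      by (simp only: below diag) (simp add: algebra_simps)
    finally show ?thesis by simp
  qed (use Suc.prems in \<open>simp add: split_vec.simps(2) T_apply_eq T_diag\<close>)
qed simp

lemma P_apply_split_vec_Suc: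
  "j \<le> d \<Longrightarrow> P_apply j (split_vec (Suc k)) = (th j - th k) * P_apply j (split_vec k)"
  by (simp add: split_vec.simps(2) P_apply_diff P_apply_scale P_apply_T_apply algebra_simps)

lemma P_apply_split_vec: "j \<le> d \<Longrightarrow> P_apply j (split_vec k) = (\<Prod>h<k. th j - th h) * P j 0"
proof (induction k)
  case 0
  have "P_apply j (split_vec 0) = (\<Sum>l=0..d. if l = 0 then P j 0 else 0)"
    unfolding P_apply_def by (intro sum.cong) auto
  then show ?case by simp
qed (simp add: P_apply_split_vec_Suc)

lemma P_apply_split_vec_eq_0: "\<lbrakk>j < k; k \<le> d\<rbrakk> \<Longrightarrow> P_apply j (split_vec k) = 0"
  by (auto simp: P_apply_split_vec)

lemma P_apply_split_vec_neq_0: "k \<le> d \<Longrightarrow> P_apply k (split_vec k) \<noteq> 0"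
  using th_inj by (auto simp: P_apply_split_vec P_first_col_neq_0 dest: inj_onD)

lemma vec_eq_0_if_P_apply_eq_0:
  "\<lbrakk>k \<le> d + 1; \<And>l. \<lbrakk>k \<le> l; l \<le> d\<rbrakk> \<Longrightarrow> c l = 0; \<And>j. j < k \<Longrightarrow> P_apply j c = 0; m \<le> d\<rbrakk>
    \<Longrightarrow> c m = 0"
proof (induction k arbitrary: c m)
  case (Suc k)
  have k: "k \<le> d" using Suc.prems(1) by simp
  define t where "t = c k / split_vec k k"
  define c' where "c' = (\<lambda>l. c l - t * split_vec k l)"
  have "c' l = 0" if "k \<le> l" "l \<le> d" for l
  proof (cases "l = k")
    case True
    then show ?thesis using split_vec_diag_neq_0[OF k] by (simp add: c'_def t_def)
  qed (use that Suc.prems(2) split_vec_above in \<open>simp add: c'_def\<close>)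
  moreover have "P_apply j c' = 0" if "j < k" for j
    using that k Suc.prems(3)
    by (simp add: c'_def P_apply_diff P_apply_scale P_apply_split_vec_eq_0)
  ultimately have c': "c' l = 0" if "l \<le> d" for l
    using Suc.IH[of c'] k that by simp
  then have "P_apply k c = t * P_apply k (split_vec k)"
    by (subst P_apply_cong[of c "\<lambda>l. t * split_vec k l"]) (auto simp: c'_def P_apply_scale)
  then have "t = 0" using Suc.prems(3)[of k] P_apply_split_vec_neq_0[OF k] by simp
  then show ?case using c'[OF Suc.prems(4)] by (simp add: c'_def)
qed simp

text \<open>The vector \<open>(A\<^sup>* - \<theta>\<^sup>*\<^sub>k) w\<^sub>k\<close> is supported on \<open>0..k-1\<close>, while rows \<open>0..k-2\<close>
  of \<open>P\<close> annihilate it because \<open>M\<close> is tridiagonal; so it is a multiple of \<open>w\<^sub>k\<^sub>-\<^sub>1\<close>,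
  and comparing entries \<open>k - 1\<close> identifies the factor as \<open>\<phi>\<^sub>k\<close>.\<close>

lemma ths_split_vec:
  assumes k: "k \<le> d" and j: "j \<le> d"
  shows "(ths j - ths k) * split_vec k j = bipartite_phi th ths k * split_vec (k - 1) j"
proof (cases k)
  case 0
  then show ?thesis by (simp add: bipartite_phi_def)
next
  case (Suc i)
  define y where
    "y = (\<lambda>l. ths l * split_vec k l - ths k * split_vec k l - bipartite_phi th ths k * split_vec i l)"
  have "y l = 0" if "i \<le> l" "l \<le> d" for l
  proof (cases "l = i")
    case True
    have below: "split_vec k i = - (\<Sum>h<k. th h) * split_vec i i"
      using split_vec_below_diag[of k] Suc k by simp
    show ?thesis
      unfolding y_def True below bipartite_phi_def by (simp add: Suc algebra_simps)
  next
    case False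
    then have "k \<le> l" using that Suc by linarith
    then show ?thesis using that Suc split_vec_above by (cases "l = k") (auto simp: y_def)
  qed
  moreover have "P_apply j' y = 0" if "j' < i" for j'
    using that Suc k
    by (simp add: y_def P_apply_diff P_apply_scale P_apply_ths P_apply_split_vec_eq_0)
  ultimately have "y j = 0"
    using vec_eq_0_if_P_apply_eq_0[of i y j] Suc k j by simp
  then show ?thesis using Suc by (simp add: y_def algebra_simps)
qed

lemma P_apply_ths_split_vec:
  assumes "k \<le> d" and "j \<le> d"
  shows "P_apply j (\<lambda>l. ths l * split_vec k l)
    = ths k * P_apply j (split_vec k) + bipartite_phi th ths k * P_apply j (split_vec (k - 1))"
proof -
  have "P_apply j (\<lambda>l. ths l * split_vec k l)
      = P_apply j (\<lambda>l. ths k * split_vec k l + bipartite_phi th ths k * split_vec (k - 1) l)"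
    using ths_split_vec[OF assms(1)] by (intro P_apply_cong) (simp add: algebra_simps)
  then show ?thesis by (simp add: P_apply_add P_apply_scale)
qed

lemma M_super_split_vec:
  assumes "i < d"
  shows "M i (Suc i) * P_apply (Suc i) (split_vec (Suc i))
    = bipartite_phi th ths (Suc i) * P_apply i (split_vec i)"
proof -
  have "P_apply (i - 1) (split_vec (Suc i)) = 0"
    using assms by (intro P_apply_split_vec_eq_0) auto
  then show ?thesis
    using assms P_apply_ths[of i "split_vec (Suc i)"] P_apply_ths_split_vec[of "Suc i" i]
    by (simp add: P_apply_split_vec_eq_0)
qed

lemma partial_sum_th_neq_0:
  assumes "0 < k" "k \<le> d" shows "(\<Sum>h<k. th h) \<noteq> 0"
proof -
  obtain i where i: "k = Suc i" "i < d" using assms by (metis Suc_le_lessD gr0_implies_Suc)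
  have "M i (Suc i) * P_apply (Suc i) (split_vec (Suc i)) \<noteq> 0"
    using M_super[of i] P_apply_split_vec_neq_0[of "Suc i"] i by simp
  then show ?thesis using M_super_split_vec[of i] i by (auto simp: bipartite_phi_def)
qed

lemma M_diag_eq_bipartite_astar:
  assumes i: "i < d"
  shows "M i i = bipartite_astar th ths i"
proof -
  let ?g = "\<lambda>j k. P_apply j (split_vec k)" and ?phi = "bipartite_phi th ths"
  have "P_apply (i - 1) (split_vec i) = 0" if "0 < i"
    using that i by (intro P_apply_split_vec_eq_0) auto
  then have A: "P_apply i (\<lambda>l. ths l * split_vec i l) = M i i * ?g i i + M i (Suc i) * ?g (Suc i) i"
    using i P_apply_ths[of i "split_vec i"] by (cases "i = 0") simp_all
  have B: "P_apply i (\<lambda>l. ths l * split_vec i l) = ths i * ?g i i + ?phi i * ?g i (i - 1)"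
    using P_apply_ths_split_vec i by simp
  have C: "M i (Suc i) * ?g (Suc i) i = ?phi (Suc i) / (th (Suc i) - th i) * ?g i i"
  proof -
    have "?g (Suc i) (Suc i) = (th (Suc i) - th i) * ?g (Suc i) i"
      using i by (simp add: P_apply_split_vec_Suc)
    then have "M i (Suc i) * ?g (Suc i) i * (th (Suc i) - th i) = ?phi (Suc i) * ?g i i"
      using M_super_split_vec[OF i] by (simp add: ac_simps)
    moreover have "th (Suc i) - th i \<noteq> 0" using th_diff_neq_0 i by simp
    ultimately show ?thesis by (simp add: field_simps)
  qed
  have D: "?phi i * ?g i (i - 1) = ?phi i / (th i - th (i - 1)) * ?g i i"
  proof (cases i)
    case (Suc h)
    have "th i - th h \<noteq> 0" using th_diff_neq_0 i Suc by simp
    then show ?thesis using i Suc by (simp add: P_apply_split_vec_Suc)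
  qed (simp add: bipartite_phi_def)
  have "M i i * ?g i i = ths i * ?g i i + ?phi i * ?g i (i - 1) - M i (Suc i) * ?g (Suc i) i"
    using A B by (simp add: algebra_simps)
  also have "\<dots> = bipartite_astar th ths i * ?g i i"
    unfolding C D bipartite_astar_def by (simp add: algebra_simps)
  finally show ?thesis using P_apply_split_vec_neq_0 i by simp
qed

lemma reversed_coords:
  "bipartite_leonard_coords d (\<lambda>j m. T (d - j) (d - m)) (\<lambda>j m. P j (d - m)) M th (\<lambda>k. ths (d - k))"
proof unfold_locales
  fix j m assume "j \<le> d" "m \<le> d" "m + 1 < j \<or> j + 1 < m"
  then show "T (d - j) (d - m) = 0" by (intro T_far) auto
next
  fix j m assume "j \<le> d" "m \<le> d" "j = m + 1 \<or> m = j + 1"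
  then show "T (d - j) (d - m) \<noteq> 0" by (intro T_adj) auto
next
  fix j m assume "j \<le> d" "m \<le> d" "j = m + 1 \<or> m = j + 1"
  then show "M j m \<noteq> 0" by (intro M_adj) auto
next
  fix j l assume "j \<le> d" "l \<le> d"
  then show "(\<Sum>m=0..d. P j (d - m) * T (d - m) (d - l)) = th j * P j (d - l)"
    using sum_atLeastAtMost_reverse[of "\<lambda>m. P j m * T m (d - l)"] P_T by simp
next
  fix j assume "j \<le> d"
  then obtain l where "l \<le> d" "P j l \<noteq> 0" using P_row by blast
  then show "\<exists>l\<le>d. P j (d - l) \<noteq> 0" by (intro exI[of _ "d - l"]) auto
qed (simp_all add: T_diag M_far P_ths th_inj)

end

lemma bipartite_leonard_coords_of_mats:
  assumes P: "inverse_mats (d + 1) P Q" and T: "T \<in> carrier_mat (d + 1) (d + 1)"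
    and M: "M \<in> carrier_mat (d + 1) (d + 1)"
    and PT: "P * T = mat_diag (d + 1) th * P" and PM: "P * mat_diag (d + 1) ths = M * P"
    and T_far: "\<And>j m. \<lbrakk>j \<le> d; m \<le> d; m + 1 < j \<or> j + 1 < m\<rbrakk> \<Longrightarrow> T $$ (j, m) = 0"
    and T_adj: "\<And>j m. \<lbrakk>j \<le> d; m \<le> d; j = m + 1 \<or> m = j + 1\<rbrakk> \<Longrightarrow> T $$ (j, m) \<noteq> 0"
    and T_diag: "\<And>j. j \<le> d \<Longrightarrow> T $$ (j, j) = 0"
    and M_far: "\<And>j m. \<lbrakk>j \<le> d; m \<le> d; m + 1 < j \<or> j + 1 < m\<rbrakk> \<Longrightarrow> M $$ (j, m) = 0"
    and M_adj: "\<And>j m. \<lbrakk>j \<le> d; m \<le> d; j = m + 1 \<or> m = j + 1\<rbrakk> \<Longrightarrow> M $$ (j, m) \<noteq> 0"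
    and "inj_on th {0..d}"
  shows "bipartite_leonard_coords d (\<lambda>j m. T $$ (j, m)) (\<lambda>j m. P $$ (j, m)) (\<lambda>j m. M $$ (j, m))
    th ths"
proof unfold_locales
  note P' = inverse_mats_D[OF P]
  fix j l assume jl: "j \<le> d" "l \<le> d"
  have "(P * T) $$ (j, l) = th j * P $$ (j, l)"
    using P' jl by (simp add: PT mat_diag_mult_left)
  then show "(\<Sum>m=0..d. P $$ (j, m) * T $$ (m, l)) = th j * P $$ (j, l)"
    using mat_mult_entry_sum[OF P'(1) T jl] by simp
  have "(M * P) $$ (j, l) = P $$ (j, l) * ths l"
    using P' jl by (simp add: PM[symmetric] mat_diag_mult_right)
  then show "P $$ (j, l) * ths l = (\<Sum>m=0..d. M $$ (j, m) * P $$ (m, l))"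
    using mat_mult_entry_sum[OF M P'(1) jl] by simp
next
  fix j assume "j \<le> d"
  then show "\<exists>l\<le>d. P $$ (j, l) \<noteq> 0"
    using inverse_mats_row_neq_0[OF P, of j] by (auto simp: less_Suc_eq_le)
qed (use assms in auto)

lemma bipartite_leonard_coords_exist:
  fixes A :: "'a::field mat"
  assumes A: "mult_free d A th" "\<forall>i\<le>d. prim_idem d A th i (E i)"
    and bip: "\<forall>i\<le>d. mat_trace (Es i * A) = 0"
    and leo: "leonard_system d A E (mat_lincomb d ths Es) Es"
  shows "\<exists>T P M. bipartite_leonard_coords d T P M th ths"
proof -
  let ?n = "d + 1" and ?As = "mat_lincomb d ths Es"
  obtain ths' where As: "mult_free d ?As ths'" "\<forall>i\<le>d. prim_idem d ?As ths' i (Es i)"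
    and tri: "tridiag_wrt d Es A" "tridiag_wrt d E ?As"
    using leo unfolding leonard_system_def by blast
  obtain C Ci where C: "inverse_mats ?n C Ci" "\<forall>j\<le>d. Ci * E j * C = mat_diag_unit ?n j"
    and CA: "Ci * A * C = mat_diag ?n th"
    using prim_idems_diagonalize[OF A] by blast
  obtain B Bi where B: "inverse_mats ?n B Bi" "\<forall>j\<le>d. Bi * Es j * B = mat_diag_unit ?n j"
    using prim_idems_diagonalize[OF As] by blast
  have A_carrier: "A \<in> carrier_mat ?n ?n" and As_carrier: "?As \<in> carrier_mat ?n ?n"
    using A(1) As(1) by (simp_all add: mult_free_def)
  have E: "E j \<in> carrier_mat ?n ?n" "Es j \<in> carrier_mat ?n ?n" if "j \<le> d" for j
    using A(2) As(2) that by (simp_all add: prim_idem_def)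
  have "Bi * ?As * B = mat_diag ?n ths"
    using B E by (intro mat_lincomb_conj) auto
  then have PM: "(Ci * B) * mat_diag ?n ths = (Ci * ?As * C) * (Ci * B)"
    using inverse_mats_change_basis[OF C(1) B(1) As_carrier] by simp
  have PT: "(Ci * B) * (Bi * A * B) = mat_diag ?n th * (Ci * B)"
    using inverse_mats_change_basis[OF C(1) B(1) A_carrier] CA by simp
  have T_diag: "(Bi * A * B) $$ (j, j) = 0" if "j \<le> d" for j
    using mat_trace_idem_mult[OF B(1) E(2)[OF that] A_carrier, of j] B(2) bip that by simp
  have T: "Bi * A * B \<in> carrier_mat ?n ?n" and M: "Ci * ?As * C \<in> carrier_mat ?n ?n"
    using inverse_mats_D[OF B(1)] inverse_mats_D[OF C(1)] A_carrier As_carrier by auto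
  note T_tri = tridiag_wrt_conj[OF B(1) E(2) B(2)[rule_format] A_carrier tri(1)]
    and M_tri = tridiag_wrt_conj[OF C(1) E(1) C(2)[rule_format] As_carrier tri(2)]
  have "bipartite_leonard_coords d (\<lambda>j m. (Bi * A * B) $$ (j, m)) (\<lambda>j m. (Ci * B) $$ (j, m))
      (\<lambda>j m. (Ci * ?As * C) $$ (j, m)) th ths"
    using A(1) unfolding mult_free_def
    by (intro bipartite_leonard_coords_of_mats[OF inverse_mats_mult[OF C(1) B(1)] T M PT PM
          T_tri(1) T_tri(2) T_diag M_tri(1) M_tri(2)]) auto
  then show ?thesis by blast
qed

theorem proposition11p4:
  fixes d :: nat and A :: "'a::field mat" and Es E :: "nat \<Rightarrow> 'a mat"
    and th ths :: "nat \<Rightarrow> 'a"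
  assumes "d \<ge> 1"
    and "orth_idem_system d Es"
    and "A \<in> carrier_mat (d+1) (d+1)"
    and "tridiag_wrt d Es A"
    and "mult_free d A th"
    and "\<forall>i\<le>d. prim_idem d A th i (E i)"
    and "\<forall>i\<le>d. mat_trace (Es i * A) = 0"
    and "leonard_system d A E (mat_lincomb d ths Es) Es"
  shows "\<forall>i<d. th i * (ths (d - i - 1) - ths (i + 1)) = th (i + 1) * (ths (d - i) - ths i)"
proof -
  obtain T P M where "bipartite_leonard_coords d T P M th ths"
    using bipartite_leonard_coords_exist assms(5-8) by blast
  then interpret bipartite_leonard_coords d T P M th ths .
  interpret reversed: bipartite_leonard_coords d "\<lambda>j m. T (d - j) (d - m)" "\<lambda>j m. P j (d - m)" M th
      "\<lambda>k. ths (d - k)"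
    by (rule reversed_coords)
  show ?thesis
    using th_inj partial_sum_th_neq_0 M_diag_eq_bipartite_astar reversed.M_diag_eq_bipartite_astar
    by (intro recurrence_if_bipartite_astar_reverse_eq) auto
qed

end
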